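(* Let $n$, $k$, $t$ be positive integers with $k\geq t+2$ and $n\geq 2k+1+\delta_{2,q}$. For positive integers $x$ define $$f(n,k,t,x)={x\brack t}{k-t+1\brack 1}^{x-t}{n-x\brack k-x}+{x\brack t}\sum_{i=0}^{x-t-1}{k-t+1\brack 1}^{i}.$$ Then $f(n,k,t,x)>f(n,k,t,x+1)$ for every $x\in\{t+1,\ldots,k-1\}$.
   Context: $q$ is a prime power and ${m\brack r}$ denotes the Gaussian binomial coefficient $\prod_{i=0}^{r-1}\frac{q^{m-i}-1}{q^{r-i}-1}$ (equal to $1$ for $r=0$). $\delta_{a,b}$ is the Kronecker delta. *)

theory Defs
  imports Complex_Main "HOL-Computational_Algebra.Primes"
begin

definition gauss_binom :: "nat \<Rightarrow> nat \<Rightarrow> nat \<Rightarrow> real" where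
  "gauss_binom q m r = (\<Prod>i<r. (real q ^ (m - i) - 1) / (real q ^ (r - i) - 1))"

definition kdelta :: "nat \<Rightarrow> nat \<Rightarrow> nat" where
  "kdelta a b = (if a = b then 1 else 0)"

definition fnktx :: "nat \<Rightarrow> nat \<Rightarrow> nat \<Rightarrow> nat \<Rightarrow> nat \<Rightarrow> real" where
  "fnktx q n k t x =
     gauss_binom q x t * gauss_binom q (k - t + 1) 1 ^ (x - t) * gauss_binom q (n - x) (k - x)
     + gauss_binom q x t * (\<Sum>i=0..<x - t. gauss_binom q (k - t + 1) 1 ^ i)"

end

theory Submission
  imports Defs
begin

(* Write [a,b] for gauss_binom q a b and A = [k-t+1,1]. Raising x to x+1 multiplies the
   leading coefficient [x,t] by a factor of at most (4/3) q^t, while it divides [n-x,k-x]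
   by a factor of at least q^(n-k). Since A (q-1) < q^(k-t+1), the hypothesis
   n - k >= k+1+delta(2,q) makes the second effect win even against the extra factor
   A^2/(A-1) that f(x+1) carries:
     [x+1,t] A^2 [n-x-1,k-x-1] <= [x,t] [n-x,k-x] (A-1).
   Since (A-1) (sum of A^i for i < x-t) = A^(x-t) - 1, this comparison of the leading terms also
   absorbs the geometric sums in f, giving f(x) > f(x+1). *)

lemma gauss_binom_ge_one:
  assumes "2 \<le> q" "r \<le> m"
  shows "1 \<le> gauss_binom q m r"
  unfolding gauss_binom_def
proof (rule prod_ge_1)
  fix i assume "i \<in> {..<r}"
  then have "1 < real q ^ (r - i)" "real q ^ (r - i) \<le> real q ^ (m - i)"
    using assms by (auto intro!: one_less_power power_increasing)
  then show "1 \<le> (real q ^ (m - i) - 1) / (real q ^ (r - i) - 1)" by simp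
qed

lemma gauss_binom_one: "gauss_binom q m 1 = (real q ^ m - 1) / (real q - 1)"
  by (simp add: gauss_binom_def)

lemma gauss_binom_one_ge_seven:
  assumes "2 \<le> q" "3 \<le> j"
  shows "7 \<le> gauss_binom q j 1"
proof -
  have "real q ^ 3 \<le> real q ^ j"
    using assms by (intro power_increasing) auto
  moreover have "0 \<le> (real q - 1) * (real q - 2) * (real q + 3)"
    using assms by simp
  ultimately have "7 * (real q - 1) \<le> real q ^ j - 1"
    by (simp add: algebra_simps power3_eq_cube)
  then show ?thesis
    unfolding gauss_binom_one using assms by (simp add: pos_le_divide_eq)
qed

lemma gauss_binom_absorption:
  "gauss_binom q (Suc m) (Suc r) = (real q ^ Suc m - 1) / (real q ^ Suc r - 1) * gauss_binom q m r"
  unfolding gauss_binom_def prod.lessThan_Suc_shift by simp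

lemma gauss_binom_absorption_ge:
  assumes "2 \<le> q" "r \<le> m"
  shows "real q ^ (m - r) * gauss_binom q m r \<le> gauss_binom q (Suc m) (Suc r)"
proof -
  define P R where "P = real q ^ (m - r)" and "R = real q ^ Suc r"
  have "real q ^ Suc m = P * R"
    using assms by (simp add: P_def R_def flip: power_add)
  moreover have "1 \<le> P" "1 < R"
    using assms unfolding P_def R_def by (simp, intro one_less_power) auto
  ultimately have "P \<le> (real q ^ Suc m - 1) / (R - 1)"
    by (simp add: pos_le_divide_eq algebra_simps)
  then have "P * gauss_binom q m r \<le> (real q ^ Suc m - 1) / (R - 1) * gauss_binom q m r"
    using gauss_binom_ge_one[of q r m] assms by (intro mult_right_mono) auto
  then show ?thesis
    unfolding gauss_binom_absorption P_def R_def .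
qed

lemma gauss_binom_Suc_left:
  assumes "1 < q" "t \<le> x"
  shows "gauss_binom q (Suc x) t = (real q ^ Suc x - 1) / (real q ^ (Suc x - t) - 1) * gauss_binom q x t"
proof -
  define f where "f i = real q ^ (Suc x - i) - 1" for i
  \<comment> \<open>both sides are the product of \<open>f i\<close> over \<open>i \<le> t\<close>\<close>
  have "(\<Prod>i<t. f i) * f t = f 0 * (\<Prod>i<t. real q ^ (x - i) - 1)"
    using prod.lessThan_Suc_shift[of f t] by (simp add: f_def)
  then have "gauss_binom q (Suc x) t * f t = f 0 * gauss_binom q x t"
    unfolding gauss_binom_def prod_dividef by (simp add: f_def)
  moreover have "1 < real q ^ (Suc x - t)"
    using assms by (intro one_less_power) auto
  ultimately show ?thesis
    by (simp add: f_def field_simps)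
qed

lemma gauss_binom_Suc_left_le:
  assumes "2 \<le> q" "t < x"
  shows "gauss_binom q (Suc x) t \<le> 4/3 * real q ^ t * gauss_binom q x t"
proof -
  define P R where "P = real q ^ t" and "R = real q ^ (Suc x - t)"
  have "real q ^ 2 \<le> R"
    using assms by (auto simp: R_def intro!: power_increasing)
  moreover have "(2::real) ^ 2 \<le> real q ^ 2"
    using assms by (intro power_mono) auto
  ultimately have "4 \<le> R" by simp
  moreover have "real q ^ Suc x = P * R"
    using assms by (simp add: P_def R_def flip: power_add)
  moreover have "0 \<le> P * (R - 4)"
    using \<open>4 \<le> R\<close> by (simp add: P_def)
  ultimately have ratio: "(real q ^ Suc x - 1) / (R - 1) \<le> 4/3 * P"
    by (simp add: pos_divide_le_eq algebra_simps)
  have "gauss_binom q (Suc x) t = (real q ^ Suc x - 1) / (R - 1) * gauss_binom q x t"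
    unfolding R_def using assms by (intro gauss_binom_Suc_left) auto
  also have "\<dots> \<le> 4/3 * P * gauss_binom q x t"
    using ratio gauss_binom_ge_one[of q t x] assms by (intro mult_right_mono) auto
  finally show ?thesis by (simp add: P_def)
qed

lemma two_power_Suc_le:
  fixes q n k :: nat
  assumes "2 \<le> q" "2 * k + 1 + kdelta 2 q \<le> n"
  shows "2 * q ^ Suc k \<le> q ^ (n - k) * (q - 1)"
proof (cases "q = 2")
  case True
  then have "q ^ Suc (Suc k) \<le> q ^ (n - k)"
    using assms by (intro power_increasing) (auto simp: kdelta_def)
  then show ?thesis using True by simp
next
  case False
  then have "Suc k \<le> n - k" "2 \<le> q - 1"
    using assms by (auto simp: kdelta_def)
  then have "q ^ Suc k \<le> q ^ (n - k)"
    using assms by (intro power_increasing) auto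
  with \<open>2 \<le> q - 1\<close> show ?thesis by (metis mult.commute mult_le_mono)
qed

lemma gauss_binom_step_condition:
  fixes q n k t x :: nat
  assumes "2 \<le> q" "t < x" "x < k" "2 * k + 1 + kdelta 2 q \<le> n"
  defines "A \<equiv> gauss_binom q (k - t + 1) 1"
  shows "gauss_binom q (Suc x) t * A\<^sup>2 * gauss_binom q (n - Suc x) (k - Suc x)
           \<le> gauss_binom q x t * gauss_binom q (n - x) (k - x) * (A - 1)"
proof -
  define Q G G' B B' where "Q = real q" and "G = gauss_binom q x t"
    and "G' = gauss_binom q (Suc x) t" and "B = gauss_binom q (n - Suc x) (k - Suc x)"
    and "B' = gauss_binom q (n - x) (k - x)"
  have "0 \<le> Q" "1 \<le> G" "1 \<le> B"
    unfolding Q_def G_def B_def using assms by (auto intro!: gauss_binom_ge_one)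
  have "7 \<le> A"
    unfolding A_def using assms by (intro gauss_binom_one_ge_seven) auto
  have G': "G' \<le> 4/3 * Q ^ t * G"
    unfolding G'_def G_def Q_def using assms by (intro gauss_binom_Suc_left_le) auto
  have "k - Suc x \<le> n - Suc x"
    using assms by simp
  moreover have "Suc (n - Suc x) = n - x" "Suc (k - Suc x) = k - x" "n - Suc x - (k - Suc x) = n - k"
    using assms by auto
  ultimately have B': "Q ^ (n - k) * B \<le> B'"
    using gauss_binom_absorption_ge[OF assms(1)] unfolding Q_def B_def B'_def by metis
  have "Q ^ t * A * (Q - 1) \<le> Q ^ t * Q ^ (k - t + 1)"
    unfolding A_def gauss_binom_one Q_def using assms by simp
  also have "\<dots> = Q ^ Suc k"
    using assms by (simp flip: power_add)
  finally have "2 * (Q ^ t * A) * (Q - 1) \<le> 2 * Q ^ Suc k"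
    by simp
  also have "\<dots> \<le> Q ^ (n - k) * (Q - 1)"
  proof -
    have "real (2 * q ^ Suc k) \<le> real (q ^ (n - k) * (q - 1))"
      using two_power_Suc_le[OF assms(1,4)] by (simp only: of_nat_le_iff)
    then show ?thesis
      using assms(1) unfolding Q_def by (simp add: of_nat_diff)
  qed
  finally have QA: "2 * (Q ^ t * A) \<le> Q ^ (n - k)"
    using assms(1) unfolding Q_def by simp
  have "G' * A\<^sup>2 * B \<le> (4/3 * Q ^ t * G) * (7/6 * (A * (A - 1))) * B"
    using G' \<open>7 \<le> A\<close> \<open>1 \<le> B\<close> \<open>1 \<le> G\<close> \<open>0 \<le> Q\<close>
    by (intro mult_right_mono mult_mono) (auto simp: power2_eq_square algebra_simps)
  also have "\<dots> = 7/9 * (2 * (Q ^ t * A)) * (G * B * (A - 1))"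
    by (simp add: field_simps)
  also have "\<dots> \<le> Q ^ (n - k) * (G * B * (A - 1))"
    using QA zero_le_power[OF \<open>0 \<le> Q\<close>, of "n - k"] \<open>7 \<le> A\<close> \<open>1 \<le> G\<close> \<open>1 \<le> B\<close>
    by (intro mult_right_mono) auto
  also have "\<dots> = (Q ^ (n - k) * B) * (G * (A - 1))"
    by (simp add: algebra_simps)
  also have "\<dots> \<le> B' * (G * (A - 1))"
    using B' \<open>7 \<le> A\<close> \<open>1 \<le> G\<close> by (intro mult_right_mono) auto
  also have "\<dots> = G * B' * (A - 1)"
    by (simp add: algebra_simps)
  finally show ?thesis
    unfolding G'_def G_def B_def B'_def .
qed

lemma geometric_step_less:
  fixes G G' A B B' :: real
  assumes "0 \<le> G" "0 < G'" "1 < A" "1 \<le> B"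
    and "G' * A\<^sup>2 * B \<le> G * B' * (A - 1)"
  shows "G' * (A ^ Suc m * B + (\<Sum>i<Suc m. A ^ i)) < G * (A ^ m * B' + (\<Sum>i<m. A ^ i))"
proof -
  define P S where "P = A ^ m" and "S = (\<Sum>i<m. A ^ i)"
  have S: "(A - 1) * S = P - 1"
    unfolding P_def S_def by (simp add: power_diff_1_eq)
  have "1 \<le> P"
    unfolding P_def using assms by simp
  have "(A - 1) * (G * (P * B' + S) - G' * (A * P * B + (S + P)))
      = P * (G * B' * (A - 1) - G' * A\<^sup>2 * B) + G' * A * P * (B - 1) + G * (P - 1) + G'
        + (G - G') * ((A - 1) * S - (P - 1))"
    by (simp add: algebra_simps power2_eq_square)
  also have "\<dots> = P * (G * B' * (A - 1) - G' * A\<^sup>2 * B) + G' * A * P * (B - 1) + G * (P - 1) + G'"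
    using S by simp
  also have "\<dots> > 0"
    using assms \<open>1 \<le> P\<close> by (intro add_nonneg_pos add_nonneg_nonneg mult_nonneg_nonneg) auto
  finally have "G' * (A * P * B + (S + P)) < G * (P * B' + S)"
    using assms(3) by (simp add: zero_less_mult_iff)
  then show ?thesis
    by (simp add: P_def S_def algebra_simps)
qed

theorem lemma2p3:
  fixes q n k t x :: nat
  assumes "\<exists>p e. prime p \<and> e \<ge> 1 \<and> q = p ^ e"
    and "n > 0" "k > 0" "t > 0"
    and "k \<ge> t + 2"
    and "n \<ge> 2 * k + 1 + kdelta 2 q"
    and "t + 1 \<le> x" "x \<le> k - 1"
  shows "fnktx q n k t x > fnktx q n k t (x + 1)"
proof -
  obtain p e where p: "prime p" "1 \<le> e" "q = p ^ e"
    using assms(1) by blast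
  then have "p \<le> q"
    using prime_gt_0_nat[OF p(1)] by (simp add: self_le_power)
  then have q: "2 \<le> q"
    using prime_ge_2_nat[OF p(1)] by linarith
  define A where "A = gauss_binom q (k - t + 1) 1"
  have "7 \<le> A"
    unfolding A_def using q assms(5) by (intro gauss_binom_one_ge_seven) auto
  then have "1 < A"
    by simp
  have pos: "0 \<le> gauss_binom q x t" "0 < gauss_binom q (Suc x) t"
    "1 \<le> gauss_binom q (n - Suc x) (k - Suc x)"
    using gauss_binom_ge_one[of q t x] gauss_binom_ge_one[of q t "Suc x"]
      gauss_binom_ge_one[of q "k - Suc x" "n - Suc x"] q assms(6-8) by auto
  have "gauss_binom q (Suc x) t * A\<^sup>2 * gauss_binom q (n - Suc x) (k - Suc x)
      \<le> gauss_binom q x t * gauss_binom q (n - x) (k - x) * (A - 1)"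
    unfolding A_def using q assms(5-8) by (intro gauss_binom_step_condition) auto
  from geometric_step_less[OF pos(1,2) \<open>1 < A\<close> pos(3) this, of "x - t"]
  have "gauss_binom q (Suc x) t * (A ^ Suc (x - t) * gauss_binom q (n - Suc x) (k - Suc x)
        + (\<Sum>i<Suc (x - t). A ^ i))
      < gauss_binom q x t * (A ^ (x - t) * gauss_binom q (n - x) (k - x) + (\<Sum>i<x - t. A ^ i))" .
  moreover have "x + 1 - t = Suc (x - t)"
    using assms by simp
  ultimately show ?thesis
    unfolding fnktx_def A_def by (simp add: atLeast0LessThan algebra_simps)
qed

end
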